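(* Let $n$ be even and $k \geq 2$, and let $\Sigma=\{1,\dots,k\}$. Then the parity language $L^{\mathrm{even}}_{n,k}=\{w \in \Sigma^n: |w|_j \equiv 0 \pmod 2 \text{ for all } j \in \Sigma\}$ requires regular expressions of length $\mathrm{rpn}(L^{\mathrm{even}}_{n,k}) \geq \Omega\big(n^{k-2} (4k \ln k )^{2-k}\big) = n^{k-2} k^{-\Theta(k)}$.
   Context: $|w|_j$ denotes the number of occurrences of the letter $j$ in the word $w$. Regular expressions are built from $\epsilon$ and letters by union and concatenation (no $\emptyset$); $\mathrm{rpn}(L)$ is the minimum number of syntax-tree nodes of an expression describing $L$. *)

theory Defs
  imports Complex_Main
begin

datatype rexp = Eps | Let nat | Union rexp rexp | Conc rexp rexp

fun lang :: "rexp \<Rightarrow> nat list set" where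
  "lang Eps = {[]}"
| "lang (Let a) = {[a]}"
| "lang (Union r s) = lang r \<union> lang s"
| "lang (Conc r s) = {u @ v | u v. u \<in> lang r \<and> v \<in> lang s}"

fun nodes :: "rexp \<Rightarrow> nat" where
  "nodes Eps = 1"
| "nodes (Let a) = 1"
| "nodes (Union r s) = 1 + nodes r + nodes s"
| "nodes (Conc r s) = 1 + nodes r + nodes s"

definition rpn :: "nat list set \<Rightarrow> nat" where
  "rpn L = (LEAST s. \<exists>r. lang r = L \<and> nodes r = s)"

definition L_even :: "nat \<Rightarrow> nat \<Rightarrow> nat list set" where
  "L_even n k = {w. length w = n \<and> set w \<subseteq> {1..k} \<and>
                    (\<forall>j\<in>{1..k}. even (count_list w j))}"

end

theory Submission
  imports Defs
begin

text \<open>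
  Call a set of words parity-homogeneous if all its words have the same letter parities, as the
  words of \<open>L_even n k\<close> do. Expanding the indicator of a parity class into the characters
  \<open>w \<mapsto> \<Prod>a\<in>S. (-1) ^ count_list w a\<close> shows that a parity-homogeneous set of words of length
  \<open>j\<close> has density at most \<open>\<beta> j = min (1 / k) ((1 + exp (-2j/k)) ^ k / 2 ^ (k - 1))\<close> among all
  \<open>k ^ j\<close> words. The factors of a concatenation whose language is parity-homogeneous are again
  parity-homogeneous, so for every potential \<open>G\<close> with
  \<open>G (m\<^sub>1 + m\<^sub>2) \<le> G m\<^sub>1 / \<beta> m\<^sub>2 + G m\<^sub>2 / \<beta> m\<^sub>1\<close> induction on the expression gives
  \<open>card (lang r) * G m \<le> nodes r * k ^ m\<close>. Since \<open>L_even n k\<close> contains at least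
  \<open>k ^ n / 2 ^ (k - 1)\<close> words, \<open>rpn (L_even n k) \<ge> G n / 2 ^ (k - 1)\<close>. The potential
  \<open>G m \<approx> 2k (m / M) ^ (k - 2)\<close> satisfies the splitting inequality once \<open>m\<^sub>1 + m\<^sub>2 \<ge> M\<close>
  for \<open>M = 2k ln k\<close> if \<open>k \<ge> 81\<close>, and for \<open>M = k ^ 3\<close> in general: a long factor has density
  at most \<open>2 ^ (3 - k)\<close>, which pays for the power mean inequality, while a short factor only
  shrinks \<open>(m\<^sub>1 + m\<^sub>2) ^ (k - 2)\<close> by a factor its density already beats.
\<close>

section \<open>Counting words by letter parities\<close>

definition words :: "nat \<Rightarrow> nat \<Rightarrow> nat list set" where
  "words k n = {w. set w \<subseteq> {1..k} \<and> length w = n}"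

lemma finite_words: "finite (words k n)"
  unfolding words_def by (rule finite_lists_length_eq) simp

lemma card_words: "card (words k n) = k ^ n"
  unfolding words_def using card_lists_length_eq[of "{1..k}" n] by simp

lemma words_0: "words k 0 = {[]}"
  by (auto simp: words_def)

lemma words_Suc: "words k (Suc n) = (\<lambda>(a, w). a # w) ` ({1..k} \<times> words k n)"
  by (auto simp: words_def length_Suc_conv image_iff)

definition parity_sign :: "(nat \<Rightarrow> nat) \<Rightarrow> nat set \<Rightarrow> real" where
  "parity_sign e S = (\<Prod>a\<in>S. (-1) ^ e a)"

definition parity_match :: "nat \<Rightarrow> (nat \<Rightarrow> nat) \<Rightarrow> nat list \<Rightarrow> bool" where
  "parity_match k e w = (\<forall>a\<in>{1..k}. even (count_list w a + e a))"

lemma abs_parity_sign: "\<bar>parity_sign e S\<bar> = 1"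
  unfolding parity_sign_def by (simp add: abs_prod power_abs)

lemma parity_sign_count_Cons:
  assumes "finite S"
  shows "parity_sign (count_list (a # w)) S = (if a \<in> S then -1 else 1) * parity_sign (count_list w) S"
proof -
  have "parity_sign (count_list (a # w)) S = (\<Prod>b\<in>S. (if a = b then -1 else 1) * (-1) ^ count_list w b)"
    unfolding parity_sign_def by (intro prod.cong) auto
  also have "\<dots> = (\<Prod>b\<in>S. if a = b then -1 else 1) * parity_sign (count_list w) S"
    unfolding parity_sign_def by (rule prod.distrib)
  also have "(\<Prod>b\<in>S. if a = b then -1 else 1 :: real) = (if a \<in> S then -1 else 1)"
    using prod.delta[OF assms, of a "\<lambda>_. -1::real"] by (simp add: eq_commute)
  finally show ?thesis .
qed

lemma sum_sign_indicator:
  assumes "S \<subseteq> {1..k}"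
  shows "(\<Sum>a\<in>{1..k}. if a \<in> S then -1 else 1 :: real) = real k - 2 * real (card S)"
proof -
  have "finite S" using assms finite_subset by blast
  have "(\<Sum>a\<in>{1..k}. if a \<in> S then -1 else 1 :: real) = - real (card S) + real (card ({1..k} - S))"
    using assms by (simp add: sum.If_cases Int_absorb1 Diff_eq[symmetric])
  also have "card ({1..k} - S) = k - card S"
    using assms \<open>finite S\<close> by (simp add: card_Diff_subset)
  finally show ?thesis
    using card_mono[OF _ assms] by simp
qed

lemma sum_parity_sign_words:
  assumes "S \<subseteq> {1..k}"
  shows "(\<Sum>w\<in>words k n. parity_sign (count_list w) S) = (real k - 2 * real (card S)) ^ n"
proof (induction n)
  case 0
  then show ?case by (simp add: words_0 parity_sign_def)
next
  case (Suc n)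
  have "finite S" using assms finite_subset by blast
  have inj: "inj_on (\<lambda>(a, w). a # w) ({1..k} \<times> words k n)"
    by (auto simp: inj_on_def)
  have "(\<Sum>w\<in>words k (Suc n). parity_sign (count_list w) S)
      = (\<Sum>a\<in>{1..k}. \<Sum>w\<in>words k n. parity_sign (count_list (a # w)) S)"
    unfolding words_Suc sum.reindex[OF inj] sum.cartesian_product by (simp add: case_prod_unfold)
  also have "\<dots> = (\<Sum>a\<in>{1..k}. (if a \<in> S then -1 else 1) * (\<Sum>w\<in>words k n. parity_sign (count_list w) S))"
    by (simp only: parity_sign_count_Cons[OF \<open>finite S\<close>] sum_distrib_left)
  also have "\<dots> = (\<Sum>a\<in>{1..k}. if a \<in> S then -1 else 1) * (\<Sum>w\<in>words k n. parity_sign (count_list w) S)"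
    by (rule sum_distrib_right[symmetric])
  finally show ?case
    using Suc sum_sign_indicator[OF assms] by simp
qed

lemma parity_match_indicator_expansion:
  "(if parity_match k e w then 2 ^ k else 0 :: real)
     = (\<Sum>S\<in>Pow {1..k}. parity_sign e S * parity_sign (count_list w) S)"
proof -
  let ?t = "\<lambda>a. (-1::real) ^ (count_list w a + e a)"
  have "(\<Prod>a\<in>{1..k}. ?t a + 1) = (\<Sum>S\<in>Pow {1..k}. (\<Prod>a\<in>S. ?t a) * (\<Prod>a\<in>{1..k} - S. 1))"
    by (rule prod_add) simp
  also have "\<dots> = (\<Sum>S\<in>Pow {1..k}. parity_sign e S * parity_sign (count_list w) S)"
    by (simp add: parity_sign_def power_add prod.distrib mult.commute)
  finally have expand: "(\<Prod>a\<in>{1..k}. ?t a + 1) = \<dots>" .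
  show ?thesis
  proof (cases "parity_match k e w")
    case True
    then have "(\<Prod>a\<in>{1..k}. ?t a + 1) = (\<Prod>a\<in>{1..k}. 2)"
      by (intro prod.cong) (auto simp: parity_match_def)
    then show ?thesis using True expand by simp
  next
    case False
    then obtain a where "a \<in> {1..k}" "odd (count_list w a + e a)"
      unfolding parity_match_def by blast
    then have "?t a + 1 = 0" by simp
    then have "(\<Prod>a\<in>{1..k}. ?t a + 1) = 0"
      using \<open>a \<in> {1..k}\<close> by (intro prod_zero) auto
    with expand False show ?thesis by simp
  qed
qed

lemma card_parity_match:
  "real (card {w\<in>words k n. parity_match k e w}) * 2 ^ k
     = (\<Sum>S\<in>Pow {1..k}. parity_sign e S * (real k - 2 * real (card S)) ^ n)"
proof -
  have "real (card {w\<in>words k n. parity_match k e w}) * 2 ^ k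
      = (\<Sum>w\<in>words k n. if parity_match k e w then 2 ^ k else 0)"
    by (simp add: sum.inter_filter[OF finite_words, symmetric])
  also have "\<dots> = (\<Sum>w\<in>words k n. \<Sum>S\<in>Pow {1..k}. parity_sign e S * parity_sign (count_list w) S)"
    by (simp add: parity_match_indicator_expansion)
  also have "\<dots> = (\<Sum>S\<in>Pow {1..k}. parity_sign e S * (\<Sum>w\<in>words k n. parity_sign (count_list w) S))"
    by (subst sum.swap) (simp add: sum_distrib_left)
  also have "\<dots> = (\<Sum>S\<in>Pow {1..k}. parity_sign e S * (real k - 2 * real (card S)) ^ n)"
    by (intro sum.cong refl) (simp add: sum_parity_sign_words)
  finally show ?thesis .
qed

lemma card_parity_match_le:
  "real (card {w\<in>words k n. parity_match k e w}) * 2 ^ k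
     \<le> (\<Sum>S\<in>Pow {1..k}. \<bar>real k - 2 * real (card S)\<bar> ^ n)"
  unfolding card_parity_match
proof (rule sum_mono)
  fix S
  show "parity_sign e S * (real k - 2 * real (card S)) ^ n \<le> \<bar>real k - 2 * real (card S)\<bar> ^ n"
    using abs_ge_self[of "parity_sign e S * (real k - 2 * real (card S)) ^ n"]
    by (simp add: abs_mult power_abs abs_parity_sign)
qed

lemma card_parity_match_even_ge:
  assumes "even n" "k \<ge> 1"
  shows "2 * real k ^ n \<le> real (card {w\<in>words k n. parity_match k (\<lambda>_. 0) w}) * 2 ^ k"
proof -
  have "{} \<noteq> {1..k}" using assms by auto
  then have "2 * real k ^ n = (\<Sum>S\<in>{{}, {1..k}}. (real k - 2 * real (card S)) ^ n)"
    using assms(1) by (simp add: algebra_simps)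
  also have "\<dots> \<le> (\<Sum>S\<in>Pow {1..k}. (real k - 2 * real (card S)) ^ n)"
    by (rule sum_mono2) (auto intro: zero_le_even_power[OF assms(1)])
  also have "\<dots> = real (card {w\<in>words k n. parity_match k (\<lambda>_. 0) w}) * 2 ^ k"
    unfolding card_parity_match by (simp add: parity_sign_def)
  finally show ?thesis .
qed

lemma diff_double_power_le_exp:
  assumes "2 * t \<le> k"
  shows "(real k - 2 * real t) ^ j \<le> real k ^ j * exp (-2 * real j / real k) ^ t"
proof (cases "k = 0")
  case True
  then show ?thesis using assms by simp
next
  case False
  have "real k - 2 * real t = real k * (1 + (-2 * real t / real k))"
    using False by (simp add: field_simps)
  also have "\<dots> \<le> real k * exp (-2 * real t / real k)"
    by (intro mult_left_mono exp_ge_add_one_self) simp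
  finally have "(real k - 2 * real t) ^ j \<le> (real k * exp (-2 * real t / real k)) ^ j"
    using assms by (intro power_mono) simp_all
  also have "\<dots> = real k ^ j * exp (-2 * real j / real k) ^ t"
    by (simp add: power_mult_distrib exp_of_nat_mult[symmetric] mult_ac)
  finally show ?thesis .
qed

lemma abs_diff_double_power_le:
  fixes j k s :: nat
  assumes "s \<le> k"
  defines "q \<equiv> exp (-2 * real j / real k)"
  shows "\<bar>real k - 2 * real s\<bar> ^ j \<le> real k ^ j * (q ^ s + q ^ (k - s))"
proof -
  have "0 \<le> real k ^ j * q ^ s" "0 \<le> real k ^ j * q ^ (k - s)"
    by (simp_all add: q_def)
  moreover consider "2 * s \<le> k" | "2 * (k - s) \<le> k" by linarith
  then have "\<bar>real k - 2 * real s\<bar> ^ j \<le> real k ^ j * q ^ s \<or>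
             \<bar>real k - 2 * real s\<bar> ^ j \<le> real k ^ j * q ^ (k - s)"
  proof cases
    case 1
    then have "\<bar>real k - 2 * real s\<bar> = real k - 2 * real s" by simp
    with diff_double_power_le_exp[OF 1] show ?thesis unfolding q_def by simp
  next
    case 2
    have "real (k - s) = real k - real s" using assms by simp
    then have "\<bar>real k - 2 * real s\<bar> = real k - 2 * real (k - s)" using 2 by arith
    with diff_double_power_le_exp[OF 2] show ?thesis unfolding q_def by simp
  qed
  ultimately show ?thesis by (auto simp: distrib_left)
qed

lemma sum_Pow_power_card:
  fixes q :: real
  assumes "finite A"
  shows "(\<Sum>X\<in>Pow A. q ^ card X) = (1 + q) ^ card A"
    and "(\<Sum>X\<in>Pow A. q ^ (card A - card X)) = (1 + q) ^ card A"
proof -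
  have "(\<Prod>x\<in>A. q + 1) = (\<Sum>X\<in>Pow A. (\<Prod>x\<in>X. q) * (\<Prod>x\<in>A - X. 1))"
    by (rule prod_add[OF assms])
  then show "(\<Sum>X\<in>Pow A. q ^ card X) = (1 + q) ^ card A"
    by (simp add: add.commute)
  have "(\<Prod>x\<in>A. 1 + q) = (\<Sum>X\<in>Pow A. (\<Prod>x\<in>X. 1) * (\<Prod>x\<in>A - X. q))"
    by (rule prod_add[OF assms])
  also have "\<dots> = (\<Sum>X\<in>Pow A. q ^ (card A - card X))"
    by (intro sum.cong refl) (auto simp: card_Diff_subset finite_subset[OF _ assms])
  finally show "(\<Sum>X\<in>Pow A. q ^ (card A - card X)) = (1 + q) ^ card A"
    by simp
qed

definition parity_class_density :: "nat \<Rightarrow> nat \<Rightarrow> real" where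
  "parity_class_density k j = (1 + exp (-2 * real j / real k)) ^ k / 2 ^ (k - 1)"

lemma card_parity_match_le_class_density:
  assumes "k \<ge> 1"
  shows "real (card {w\<in>words k j. parity_match k e w}) \<le> parity_class_density k j * real k ^ j"
proof -
  define q where "q = exp (-2 * real j / real k)"
  have "real (card {w\<in>words k j. parity_match k e w}) * 2 ^ k
      \<le> (\<Sum>S\<in>Pow {1..k}. \<bar>real k - 2 * real (card S)\<bar> ^ j)"
    by (rule card_parity_match_le)
  also have "\<dots> \<le> (\<Sum>S\<in>Pow {1..k}. real k ^ j * (q ^ card S + q ^ (card {1..k} - card S)))"
  proof (rule sum_mono)
    fix S assume "S \<in> Pow {1..k}"
    then have "card S \<le> k" using card_mono[of "{1..k}" S] by simp
    then show "\<bar>real k - 2 * real (card S)\<bar> ^ j \<le> real k ^ j * (q ^ card S + q ^ (card {1..k} - card S))"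
      unfolding q_def using abs_diff_double_power_le by simp
  qed
  also have "\<dots> = real k ^ j * ((\<Sum>S\<in>Pow {1..k}. q ^ card S) + (\<Sum>S\<in>Pow {1..k}. q ^ (card {1..k} - card S)))"
    by (simp add: distrib_left sum.distrib sum_distrib_left)
  also have "\<dots> = 2 * real k ^ j * (1 + q) ^ k"
    by (simp only: sum_Pow_power_card[OF finite_atLeastAtMost]) simp
  also have "\<dots> = parity_class_density k j * real k ^ j * 2 ^ k"
    using assms by (cases k) (simp_all add: parity_class_density_def q_def)
  finally show ?thesis by (rule mult_right_le_imp_le) simp
qed

section \<open>Density of parity-homogeneous sets\<close>

definition parity_homogeneous :: "nat list set \<Rightarrow> bool" where
  "parity_homogeneous A \<longleftrightarrow>
     (\<forall>u\<in>A. \<forall>v\<in>A. \<forall>a. even (count_list u a) = even (count_list v a))"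

lemma parity_homogeneous_subset:
  "A \<subseteq> B \<Longrightarrow> parity_homogeneous B \<Longrightarrow> parity_homogeneous A"
  unfolding parity_homogeneous_def by blast

lemma card_parity_homogeneous_le_class_density:
  assumes "A \<subseteq> words k j" "parity_homogeneous A" "k \<ge> 1"
  shows "real (card A) \<le> parity_class_density k j * real k ^ j"
proof (cases "A = {}")
  case False
  then obtain w0 where "w0 \<in> A" by blast
  have "A \<subseteq> {w\<in>words k j. parity_match k (count_list w0) w}"
  proof
    fix w assume "w \<in> A"
    then have "even (count_list w a) = even (count_list w0 a)" for a
      using assms(2) \<open>w0 \<in> A\<close> unfolding parity_homogeneous_def by blast
    with \<open>w \<in> A\<close> assms(1) show "w \<in> {w\<in>words k j. parity_match k (count_list w0) w}"
      unfolding parity_match_def by auto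
  qed
  then have "real (card A) \<le> real (card {w\<in>words k j. parity_match k (count_list w0) w})"
    by (simp add: card_mono finite_words)
  also have "\<dots> \<le> parity_class_density k j * real k ^ j"
    by (rule card_parity_match_le_class_density[OF assms(3)])
  finally show ?thesis .
qed (simp add: parity_class_density_def)

text \<open>In a parity-homogeneous set a word is determined by all but its last letter.\<close>

lemma card_parity_homogeneous_le_power:
  assumes "A \<subseteq> words k j" "parity_homogeneous A" "j \<ge> 1"
  shows "card A \<le> k ^ (j - 1)"
proof -
  have "inj_on butlast A"
  proof (rule inj_onI)
    fix u v assume "u \<in> A" "v \<in> A" "butlast u = butlast v"
    then have "u \<noteq> []" "v \<noteq> []" using assms(1,3) by (auto simp: words_def)
    have u: "u = butlast u @ [last u]"
      using \<open>u \<noteq> []\<close> by simp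
    have v: "v = butlast u @ [last v]"
      using \<open>v \<noteq> []\<close> \<open>butlast u = butlast v\<close> by simp
    have "even (count_list u (last u)) = even (count_list v (last u))"
      using \<open>u \<in> A\<close> \<open>v \<in> A\<close> assms(2) unfolding parity_homogeneous_def by blast
    then have "last v = last u"
      by (subst (asm) u, subst (asm) v) (simp split: if_splits)
    with u v show "u = v" by simp
  qed
  moreover have "butlast ` A \<subseteq> words k (j - 1)"
    using assms(1) by (auto simp: words_def dest: in_set_butlastD)
  ultimately have "card A \<le> card (words k (j - 1))"
    by (rule card_inj_on_le[OF _ _ finite_words])
  then show ?thesis by (simp add: card_words)
qed

definition homogeneous_density :: "nat \<Rightarrow> nat \<Rightarrow> real" where
  "homogeneous_density k j = (if j = 0 then 1 else min (1 / real k) (parity_class_density k j))"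

lemma homogeneous_density_pos: "k \<ge> 1 \<Longrightarrow> homogeneous_density k j > 0"
  unfolding homogeneous_density_def parity_class_density_def
  by (auto intro!: divide_pos_pos zero_less_power add_pos_pos)

lemma homogeneous_density_le_1: "k \<ge> 1 \<Longrightarrow> homogeneous_density k j \<le> 1"
  by (auto simp: homogeneous_density_def min_le_iff_disj)

lemma homogeneous_density_le_inverse: "j \<ge> 1 \<Longrightarrow> homogeneous_density k j \<le> 1 / real k"
  by (simp add: homogeneous_density_def)

lemma homogeneous_density_le_class_density:
  "j \<ge> 1 \<Longrightarrow> homogeneous_density k j \<le> parity_class_density k j"
  by (simp add: homogeneous_density_def)

lemma card_parity_homogeneous_le:
  assumes "A \<subseteq> words k j" "parity_homogeneous A" "k \<ge> 1"
  shows "real (card A) \<le> homogeneous_density k j * real k ^ j"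
proof (cases "j = 0")
  case True
  then have "card A \<le> card (words k 0)"
    using assms(1) by (intro card_mono[OF finite_words]) auto
  then show ?thesis using True by (simp add: homogeneous_density_def card_words)
next
  case False
  have "card A \<le> k ^ (j - 1)"
    using card_parity_homogeneous_le_power[OF assms(1,2)] False by simp
  then have "real (card A) \<le> real k ^ (j - 1)"
    by (metis of_nat_le_iff of_nat_power)
  also have "\<dots> = 1 / real k * real k ^ j"
    using False assms(3) by (cases j) simp_all
  finally show ?thesis
    using card_parity_homogeneous_le_class_density[OF assms] False
    by (simp add: homogeneous_density_def min_def)
qed

section \<open>The potential bound for regular expressions\<close>

lemma lang_Conc_eq_image: "lang (Conc r s) = (\<lambda>(u, v). u @ v) ` (lang r \<times> lang s)"
  by auto

lemma finite_lang: "finite (lang r)"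
  by (induction r) (auto simp: lang_Conc_eq_image simp del: lang.simps(4))

lemma lang_nonempty: "lang r \<noteq> {}"
  by (induction r) auto

lemma card_lang_Conc_le: "card (lang (Conc r s)) \<le> card (lang r) * card (lang s)"
  unfolding lang_Conc_eq_image
  by (metis card_cartesian_product card_image_le finite_cartesian_product finite_lang)

lemma parity_homogeneous_append_left:
  assumes "parity_homogeneous {u @ v | u v. u \<in> A \<and> v \<in> B}" "v \<in> B"
  shows "parity_homogeneous A"
  unfolding parity_homogeneous_def
proof (intro ballI allI)
  fix u u' a assume "u \<in> A" "u' \<in> A"
  with assms have "even (count_list (u @ v) a) = even (count_list (u' @ v) a)"
    unfolding parity_homogeneous_def by blast
  then show "even (count_list u a) = even (count_list u' a)" by (simp, blast)
qed

lemma parity_homogeneous_append_right: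
  assumes "parity_homogeneous {u @ v | u v. u \<in> A \<and> v \<in> B}" "u \<in> A"
  shows "parity_homogeneous B"
  unfolding parity_homogeneous_def
proof (intro ballI allI)
  fix v v' a assume "v \<in> B" "v' \<in> B"
  with assms have "even (count_list (u @ v) a) = even (count_list (u @ v') a)"
    unfolding parity_homogeneous_def by blast
  then show "even (count_list v a) = even (count_list v' a)" by (simp, blast)
qed

lemma lang_Conc_subset_wordsE:
  assumes "lang (Conc r s) \<subseteq> words k m"
  obtains m1 m2 where "m = m1 + m2" "lang r \<subseteq> words k m1" "lang s \<subseteq> words k m2"
proof -
  obtain u0 v0 where u0: "u0 \<in> lang r" and v0: "v0 \<in> lang s"
    using lang_nonempty by blast
  have app: "u @ v \<in> words k m" if "u \<in> lang r" "v \<in> lang s" for u v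
    using that assms by auto
  have "m = length u0 + length v0"
    using app[OF u0 v0] by (simp add: words_def)
  moreover have "lang r \<subseteq> words k (length u0)"
    using app[OF _ v0] app[OF u0 v0] by (auto simp: words_def)
  moreover have "lang s \<subseteq> words k (length v0)"
    using app[OF u0] app[OF u0 v0] by (auto simp: words_def)
  ultimately show ?thesis using that by blast
qed

lemma product_potential_le:
  fixes a b g g1 g2 b1 b2 K1 K2 N1 N2 :: real
  assumes "0 \<le> a" "0 \<le> b" "0 < b1" "0 < b2" "a \<le> b1 * K1" "b \<le> b2 * K2"
    and "a * g1 \<le> N1 * K1" "b * g2 \<le> N2 * K2"
    and "0 \<le> g1" "0 \<le> g2" "g \<le> g1 / b2 + g2 / b1"
  shows "a * b * g \<le> (N1 + N2) * (K1 * K2)"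
proof -
  have "a * b * g \<le> a * b * (g1 / b2 + g2 / b1)"
    using assms(1,2,11) by (intro mult_left_mono) simp_all
  also have "\<dots> = (a * g1) * (b / b2) + (b * g2) * (a / b1)"
    by (simp add: field_simps)
  also have "\<dots> \<le> (N1 * K1) * K2 + (N2 * K2) * K1"
  proof -
    have "b / b2 \<le> K2" "a / b1 \<le> K1"
      using assms(3-6) by (simp_all add: pos_divide_le_eq mult.commute)
    moreover have "0 \<le> N1 * K1" "0 \<le> N2 * K2"
      using assms(1,2,7-10) by (meson order_trans zero_le_mult_iff)+
    ultimately show ?thesis
      using assms(1-4) by (intro add_mono mult_mono[OF assms(7)] mult_mono[OF assms(8)]) simp_all
  qed
  finally show ?thesis by (simp add: algebra_simps)
qed

text \<open>At a concatenation the density bounds for the two factors pay for the loss in the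
  splitting inequality of \<open>G\<close>.\<close>

lemma card_lang_mult_potential_le_nodes:
  fixes G :: "nat \<Rightarrow> real"
  assumes k: "k \<ge> 1" and G_0: "G 0 \<le> 1" and G_1: "G 1 \<le> real k" and G_nonneg: "\<And>m. 0 \<le> G m"
    and G_split: "\<And>m1 m2. G (m1 + m2)
       \<le> G m1 / homogeneous_density k m2 + G m2 / homogeneous_density k m1"
  shows "lang r \<subseteq> words k m \<Longrightarrow> parity_homogeneous (lang r) \<Longrightarrow>
    real (card (lang r)) * G m \<le> real (nodes r) * real k ^ m"
proof (induction r arbitrary: m)
  case Eps
  then have "m = 0" by (auto simp: words_def)
  with G_0 show ?case by simp
next
  case (Let a)
  then have "m = 1" by (auto simp: words_def)
  with G_1 show ?case by simp
next
  case (Union r s)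
  then have IH: "real (card (lang r)) * G m \<le> real (nodes r) * real k ^ m"
    "real (card (lang s)) * G m \<le> real (nodes s) * real k ^ m"
    using parity_homogeneous_subset[of _ "lang (Union r s)"] by auto
  have "card (lang (Union r s)) \<le> card (lang r) + card (lang s)"
    by (simp add: card_Un_le)
  then have "real (card (lang (Union r s))) * G m \<le> (real (card (lang r)) + real (card (lang s))) * G m"
    using G_nonneg by (intro mult_right_mono) simp_all
  also have "\<dots> \<le> real (nodes r) * real k ^ m + real (nodes s) * real k ^ m"
    using IH by (simp add: distrib_right)
  also have "\<dots> \<le> real (nodes (Union r s)) * real k ^ m"
    by (simp add: distrib_right)
  finally show ?case .
next
  case (Conc r s)
  obtain m1 m2 where m: "m = m1 + m2" and r: "lang r \<subseteq> words k m1" and s: "lang s \<subseteq> words k m2"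
    using lang_Conc_subset_wordsE[OF Conc.prems(1)] .
  have hom: "parity_homogeneous (lang r)" "parity_homogeneous (lang s)"
    using Conc.prems(2) lang_nonempty
    by (auto intro: parity_homogeneous_append_left parity_homogeneous_append_right)
  have "real (card (lang (Conc r s))) * G m \<le> real (card (lang r)) * real (card (lang s)) * G m"
    using card_lang_Conc_le G_nonneg by (metis mult_right_mono of_nat_le_iff of_nat_mult)
  also have "\<dots> \<le> real (nodes r + nodes s) * (real k ^ m1 * real k ^ m2)"
    using card_parity_homogeneous_le[OF r hom(1) k] card_parity_homogeneous_le[OF s hom(2) k]
      Conc.IH(1)[OF r hom(1)] Conc.IH(2)[OF s hom(2)] homogeneous_density_pos[OF k]
      G_nonneg G_split[of m1 m2]
    by (simp only: of_nat_add m, intro product_potential_le) simp_all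
  also have "\<dots> \<le> real (nodes (Conc r s)) * real k ^ m"
    by (simp add: m power_add mult_right_mono)
  finally show ?case .
qed

fun word_rexp :: "nat list \<Rightarrow> rexp" where
  "word_rexp [] = Eps"
| "word_rexp (a # w) = Conc (Let a) (word_rexp w)"

lemma lang_word_rexp: "lang (word_rexp w) = {w}"
  by (induction w) auto

lemma ex_lang_eq:
  assumes "finite A" "A \<noteq> {}"
  shows "\<exists>r. lang r = A"
  using assms
proof (induction A rule: finite_ne_induct)
  case (singleton w)
  then show ?case using lang_word_rexp by blast
next
  case (insert w A)
  then obtain r where "lang r = A" by blast
  then have "lang (Union (word_rexp w) r) = insert w A"
    by (simp add: lang_word_rexp)
  then show ?case by blast
qed

lemma nodes_ge_1: "nodes r \<ge> 1"
  by (cases r) auto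

lemma rpn_attained:
  assumes "finite L" "L \<noteq> {}"
  obtains r where "lang r = L" "nodes r = rpn L"
proof -
  have "\<exists>s r. lang r = L \<and> nodes r = s"
    using ex_lang_eq[OF assms] by blast
  then have "\<exists>r. lang r = L \<and> nodes r = rpn L"
    unfolding rpn_def by (rule LeastI_ex)
  with that show ?thesis by blast
qed

lemma L_even_eq_parity_match: "L_even n k = {w\<in>words k n. parity_match k (\<lambda>_. 0) w}"
  unfolding L_even_def words_def parity_match_def by auto

lemma finite_L_even: "finite (L_even n k)"
  unfolding L_even_eq_parity_match using finite_words by simp

lemma replicate_in_L_even:
  assumes "even n" "k \<ge> 1"
  shows "replicate n 1 \<in> L_even n k"
proof -
  have "count_list (replicate n (1::nat)) a = (if a = 1 then n else 0)" for a
    by (induction n) auto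
  with assms show ?thesis
    unfolding L_even_def by auto
qed

lemma parity_homogeneous_L_even: "parity_homogeneous (L_even n k)"
  unfolding parity_homogeneous_def
proof (intro ballI allI)
  fix u v a assume u: "u \<in> L_even n k" and v: "v \<in> L_even n k"
  show "even (count_list u a) = even (count_list v a)"
  proof (cases "a \<in> {1..k}")
    case True
    with u v show ?thesis by (simp add: L_even_def)
  next
    case False
    with u v have "a \<notin> set u" "a \<notin> set v" by (auto simp: L_even_def)
    then show ?thesis by simp
  qed
qed

lemma rpn_L_even_ge_1:
  assumes "even n" "k \<ge> 1"
  shows "rpn (L_even n k) \<ge> 1"
proof -
  obtain r where "lang r = L_even n k" "nodes r = rpn (L_even n k)"
    using rpn_attained[OF finite_L_even] replicate_in_L_even[OF assms] by blast
  then show ?thesis using nodes_ge_1[of r] by simp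
qed

lemma card_L_even_ge:
  assumes "even n" "k \<ge> 1"
  shows "real k ^ n \<le> 2 ^ (k - 1) * real (card (L_even n k))"
proof -
  have "2 * real k ^ n \<le> real (card (L_even n k)) * 2 ^ k"
    unfolding L_even_eq_parity_match by (rule card_parity_match_even_ge[OF assms])
  also have "\<dots> = 2 * (2 ^ (k - 1) * real (card (L_even n k)))"
    using assms(2) by (cases k) (simp_all add: algebra_simps)
  finally show ?thesis by simp
qed

lemma potential_le_rpn_L_even:
  fixes G :: "nat \<Rightarrow> real"
  assumes k: "k \<ge> 1" and G_0: "G 0 \<le> 1" and G_1: "G 1 \<le> real k" and G_nonneg: "\<And>m. 0 \<le> G m"
    and G_split: "\<And>m1 m2. G (m1 + m2)
       \<le> G m1 / homogeneous_density k m2 + G m2 / homogeneous_density k m1"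
    and n: "even n"
  shows "G n \<le> 2 ^ (k - 1) * real (rpn (L_even n k))"
proof -
  obtain r where r: "lang r = L_even n k" "nodes r = rpn (L_even n k)"
    using rpn_attained[OF finite_L_even] replicate_in_L_even[OF n k] by blast
  have "real (card (L_even n k)) * G n \<le> real (rpn (L_even n k)) * real k ^ n"
    using card_lang_mult_potential_le_nodes[OF k G_0 G_1 G_nonneg G_split, of r n] r
      parity_homogeneous_L_even by (simp add: L_even_eq_parity_match)
  then have "2 ^ (k - 1) * (real (card (L_even n k)) * G n)
      \<le> 2 ^ (k - 1) * (real (rpn (L_even n k)) * real k ^ n)"
    by (rule mult_left_mono) simp
  moreover have "real k ^ n * G n \<le> (2 ^ (k - 1) * real (card (L_even n k))) * G n"
    by (rule mult_right_mono[OF card_L_even_ge[OF n k] G_nonneg])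
  ultimately have "real k ^ n * G n \<le> real k ^ n * (2 ^ (k - 1) * real (rpn (L_even n k)))"
    by (simp only: mult_ac)
  then show ?thesis
    by (rule mult_left_le_imp_le) (use k in simp)
qed

section \<open>Potentials from a splitting threshold\<close>

definition split_inequality :: "nat \<Rightarrow> real \<Rightarrow> bool" where
  "split_inequality k M \<longleftrightarrow> (\<forall>m1 m2. 1 \<le> m1 \<longrightarrow> 1 \<le> m2 \<longrightarrow> M \<le> real (m1 + m2) \<longrightarrow>
      real (m1 + m2) ^ (k - 2)
        \<le> real m1 ^ (k - 2) / homogeneous_density k m2 + real m2 ^ (k - 2) / homogeneous_density k m1)"

definition potential :: "nat \<Rightarrow> real \<Rightarrow> nat \<Rightarrow> real" where
  "potential k M m = (if m = 0 then 0 else max (real k) (2 * real k * (real m / M) ^ (k - 2)))"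

lemma split_inequality_rescaled:
  assumes split: "split_inequality k M" and "0 < M" "0 \<le> c"
    and m: "1 \<le> m1" "1 \<le> m2" "M \<le> real (m1 + m2)"
  shows "c * (real (m1 + m2) / M) ^ (k - 2)
    \<le> c * (real m1 / M) ^ (k - 2) / homogeneous_density k m2
      + c * (real m2 / M) ^ (k - 2) / homogeneous_density k m1"
proof -
  have "real (m1 + m2) ^ (k - 2)
      \<le> real m1 ^ (k - 2) / homogeneous_density k m2 + real m2 ^ (k - 2) / homogeneous_density k m1"
    using split m unfolding split_inequality_def by blast
  then have "c / M ^ (k - 2) * real (m1 + m2) ^ (k - 2)
      \<le> c / M ^ (k - 2) * (real m1 ^ (k - 2) / homogeneous_density k m2
          + real m2 ^ (k - 2) / homogeneous_density k m1)"
    using assms(2,3) by (intro mult_left_mono) simp_all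
  then show ?thesis
    by (simp add: power_divide distrib_left)
qed

lemma potential_split:
  assumes k: "k \<ge> 3" and M: "M > 0" and split: "split_inequality k M"
  shows "potential k M (m1 + m2)
    \<le> potential k M m1 / homogeneous_density k m2 + potential k M m2 / homogeneous_density k m1"
proof (cases "m1 = 0 \<or> m2 = 0")
  case True
  then show ?thesis by (auto simp: homogeneous_density_def potential_def)
next
  case False
  then have m: "m1 \<ge> 1" "m2 \<ge> 1" by auto
  define D where "D = k - 2"
  define b1 where "b1 = homogeneous_density k m1"
  define b2 where "b2 = homogeneous_density k m2"
  define g1 where "g1 = potential k M m1"
  define g2 where "g2 = potential k M m2"
  have b: "0 < b1" "b1 \<le> 1" "0 < b2" "b2 \<le> 1"
    using k homogeneous_density_pos homogeneous_density_le_1 by (simp_all add: b1_def b2_def)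
  have g1: "real k \<le> g1" "2 * real k * (real m1 / M) ^ D \<le> g1"
    and g2: "real k \<le> g2" "2 * real k * (real m2 / M) ^ D \<le> g2"
    using m by (auto simp: g1_def g2_def potential_def D_def)
  have "g1 \<le> g1 / b2" "g2 \<le> g2 / b1"
    using g1(1) g2(1) b by (simp_all add: le_divide_eq mult_left_le)
  then have small: "2 * real k \<le> g1 / b2 + g2 / b1"
    using g1(1) g2(1) by linarith
  have "2 * real k * (real (m1 + m2) / M) ^ D \<le> g1 / b2 + g2 / b1"
  proof (cases "M \<le> real (m1 + m2)")
    case True
    have "2 * real k * (real (m1 + m2) / M) ^ D
        \<le> 2 * real k * (real m1 / M) ^ D / b2 + 2 * real k * (real m2 / M) ^ D / b1"
      using split_inequality_rescaled[OF split M _ m True, of "2 * real k"]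
      by (simp add: D_def b1_def b2_def)
    also have "\<dots> \<le> g1 / b2 + g2 / b1"
      using g1(2) g2(2) b by (intro add_mono divide_right_mono) simp_all
    finally show ?thesis .
  next
    case False
    then have "(real (m1 + m2) / M) ^ D \<le> 1"
      using M by (intro power_le_one) simp_all
    then have "2 * real k * (real (m1 + m2) / M) ^ D \<le> 2 * real k * 1"
      by (intro mult_left_mono) simp_all
    with small show ?thesis by linarith
  qed
  with small m show ?thesis
    unfolding b1_def[symmetric] b2_def[symmetric] g1_def[symmetric] g2_def[symmetric]
    by (simp add: potential_def D_def)
qed

lemma rpn_L_even_ge_of_split_inequality:
  assumes k: "k \<ge> 3" and M: "M \<ge> 2" and split: "split_inequality k M" and n: "even n"
  shows "real k * (real n / (2 * M)) ^ (k - 2) \<le> real (rpn (L_even n k))"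
proof -
  define D where "D = k - 2"
  have D: "D \<ge> 1" "k - 1 = Suc D" using k by (simp_all add: D_def)
  have "potential k M 1 \<le> real k"
  proof -
    have "(1 / M) ^ D \<le> 1 / M"
      using power_decreasing[of 1 D "1 / M"] D M by simp
    also have "\<dots> \<le> 1 / 2"
      using M by (simp add: field_simps)
    finally have "real k * (2 * (1 / M) ^ D) \<le> real k * 1"
      by (intro mult_left_mono) simp_all
    then show ?thesis by (simp add: potential_def D_def)
  qed
  then have "potential k M n \<le> 2 ^ (k - 1) * real (rpn (L_even n k))"
    using k M potential_split[OF k _ split] n
    by (intro potential_le_rpn_L_even) (auto simp: potential_def)
  moreover have "2 * real k * (real n / M) ^ D \<le> potential k M n"
    using D k by (simp add: potential_def D_def power_0_left)
  ultimately have "2 * real k * (real n / M) ^ D \<le> 2 * 2 ^ D * real (rpn (L_even n k))"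
    using D(2) by simp
  moreover have "real k * (real n / (2 * M)) ^ D = (2 * real k * (real n / M) ^ D) / (2 * 2 ^ D)"
    by (simp add: power_divide power_mult_distrib)
  ultimately show ?thesis
    by (simp add: D_def pos_divide_le_eq mult_ac)
qed

section \<open>Thresholds for the splitting inequality\<close>

lemma power_mean_two:
  fixes a b :: real
  assumes "0 \<le> a" "0 \<le> b"
  shows "2 * ((a + b) / 2) ^ n \<le> a ^ n + b ^ n"
proof (induction n)
  case 0
  then show ?case by simp
next
  case (Suc n)
  have "0 \<le> (a ^ n - b ^ n) * (a - b)"
    using assms power_mono[of a b n] power_mono[of b a n]
    by (cases "a \<le> b") (auto intro: mult_nonpos_nonpos mult_nonneg_nonneg)
  then have "a ^ n * b + b ^ n * a \<le> a ^ Suc n + b ^ Suc n"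
    by (simp add: algebra_simps)
  have "2 * ((a + b) / 2) ^ Suc n = (2 * ((a + b) / 2) ^ n) * ((a + b) / 2)"
    by simp
  also have "\<dots> \<le> (a ^ n + b ^ n) * ((a + b) / 2)"
    using Suc assms by (intro mult_right_mono) auto
  also have "\<dots> = (a ^ Suc n + b ^ Suc n + (a ^ n * b + b ^ n * a)) / 2"
    by (simp add: algebra_simps add_divide_distrib)
  also have "\<dots> \<le> a ^ Suc n + b ^ Suc n"
    using \<open>a ^ n * b + b ^ n * a \<le> a ^ Suc n + b ^ Suc n\<close> by simp
  finally show ?case .
qed

lemma power_add_le:
  fixes a b :: real
  assumes "0 \<le> a" "0 \<le> b" "n \<ge> 1"
  shows "(a + b) ^ n \<le> 2 ^ (n - 1) * (a ^ n + b ^ n)"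
proof -
  have "(a + b) ^ n = 2 ^ (n - 1) * (2 * ((a + b) / 2) ^ n)"
    using assms(3) by (cases n) (simp_all add: power_divide)
  also have "\<dots> \<le> 2 ^ (n - 1) * (a ^ n + b ^ n)"
    using power_mean_two[OF assms(1,2)] by (intro mult_left_mono) simp_all
  finally show ?thesis .
qed

lemma homogeneous_density_le_two_power:
  assumes k: "k \<ge> 3" and j: "j \<ge> 1" "real j \<ge> real k / 2 * ln (real k)"
  shows "homogeneous_density k j * 2 ^ (k - 3) \<le> 1"
proof -
  have "exp (-2 * real j / real k) \<le> exp (- ln (real k))"
    using j(2) k by (simp add: field_simps)
  also have "\<dots> = 1 / real k"
    using k by (simp add: exp_minus inverse_eq_divide)
  finally have "(1 + exp (-2 * real j / real k)) ^ k \<le> (1 + 1 / real k) ^ k"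
    by (intro power_mono) simp_all
  also have "\<dots> \<le> exp (1 / real k) ^ k"
    by (intro power_mono exp_ge_add_one_self) simp
  also have "\<dots> = exp 1"
    using k by (simp add: exp_of_nat_mult[symmetric])
  also have "\<dots> \<le> 4"
    using exp_le by simp
  finally have "parity_class_density k j * 2 ^ (k - 3) \<le> 4 / 2 ^ (k - 1) * 2 ^ (k - 3)"
    unfolding parity_class_density_def by (intro mult_right_mono divide_right_mono) simp_all
  also have "\<dots> = 1"
  proof -
    have "k - 1 = (k - 3) + 2" using k by simp
    then show ?thesis by (simp add: power_add)
  qed
  finally have "parity_class_density k j * 2 ^ (k - 3) \<le> 1" .
  moreover have "homogeneous_density k j * 2 ^ (k - 3) \<le> parity_class_density k j * 2 ^ (k - 3)"
    by (intro mult_right_mono homogeneous_density_le_class_density j(1)) simp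
  ultimately show ?thesis by linarith
qed

lemma split_inequality_long_factors:
  assumes k: "k \<ge> 3" and m: "1 \<le> m1" "1 \<le> m2"
    and long: "real m1 \<ge> real k / 2 * ln (real k)" "real m2 \<ge> real k / 2 * ln (real k)"
  shows "real (m1 + m2) ^ (k - 2)
    \<le> real m1 ^ (k - 2) / homogeneous_density k m2 + real m2 ^ (k - 2) / homogeneous_density k m1"
proof -
  have "2 ^ (k - 3) \<le> 1 / homogeneous_density k m1" "2 ^ (k - 3) \<le> 1 / homogeneous_density k m2"
    using homogeneous_density_le_two_power[OF k] homogeneous_density_pos m long k
    by (simp_all add: field_simps)
  have "real (m1 + m2) ^ (k - 2) \<le> 2 ^ (k - 3) * (real m1 ^ (k - 2) + real m2 ^ (k - 2))"
  proof -
    have "k - 2 - 1 = k - 3" by simp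
    then show ?thesis
      using power_add_le[of "real m1" "real m2" "k - 2"] k by simp
  qed
  also have "\<dots> = real m1 ^ (k - 2) * 2 ^ (k - 3) + real m2 ^ (k - 2) * 2 ^ (k - 3)"
    by (simp add: algebra_simps)
  also have "\<dots> \<le> real m1 ^ (k - 2) * (1 / homogeneous_density k m2)
      + real m2 ^ (k - 2) * (1 / homogeneous_density k m1)"
    using \<open>2 ^ (k - 3) \<le> 1 / homogeneous_density k m1\<close> \<open>2 ^ (k - 3) \<le> 1 / homogeneous_density k m2\<close>
    by (intro add_mono mult_left_mono) simp_all
  finally show ?thesis by simp
qed

lemma split_inequality_short_factor:
  assumes k: "k \<ge> 1" and m: "1 \<le> m2"
    and short: "homogeneous_density k m2 \<le> (1 - real m2 / real (m1 + m2)) ^ (k - 2)"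
  shows "real (m1 + m2) ^ (k - 2)
    \<le> real m1 ^ (k - 2) / homogeneous_density k m2 + real m2 ^ (k - 2) / homogeneous_density k m1"
proof -
  have pos: "homogeneous_density k m1 > 0" "homogeneous_density k m2 > 0"
    using homogeneous_density_pos k by simp_all
  have "1 - real m2 / real (m1 + m2) = real m1 / real (m1 + m2)"
    using m by (simp add: field_simps)
  with short have "real (m1 + m2) ^ (k - 2) * homogeneous_density k m2
      \<le> real (m1 + m2) ^ (k - 2) * (real m1 / real (m1 + m2)) ^ (k - 2)"
    by (intro mult_left_mono) simp_all
  also have "\<dots> = real m1 ^ (k - 2)"
    using m by (simp add: power_divide)
  finally have "real (m1 + m2) ^ (k - 2) \<le> real m1 ^ (k - 2) / homogeneous_density k m2"
    using pos by (simp add: le_divide_eq)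
  moreover have "0 \<le> real m2 ^ (k - 2) / homogeneous_density k m1"
    using pos by simp
  ultimately show ?thesis by linarith
qed

text \<open>Long factors have density at most \<open>2 ^ (3 - k)\<close>, so only a factor shorter than
  \<open>k ln k / 2\<close> needs attention.\<close>

lemma split_inequalityI:
  assumes k: "k \<ge> 3"
    and short: "\<And>m1 m2. 1 \<le> m2 \<Longrightarrow> real m2 < real k / 2 * ln (real k) \<Longrightarrow> M \<le> real (m1 + m2) \<Longrightarrow>
      homogeneous_density k m2 \<le> (1 - real m2 / real (m1 + m2)) ^ (k - 2)"
  shows "split_inequality k M"
proof -
  have ineq: "real (m1 + m2) ^ (k - 2)
      \<le> real m1 ^ (k - 2) / homogeneous_density k m2 + real m2 ^ (k - 2) / homogeneous_density k m1"
    if m: "1 \<le> m2" "m2 \<le> m1" "M \<le> real (m1 + m2)" for m1 m2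
  proof (cases "real m2 \<ge> real k / 2 * ln (real k)")
    case True
    moreover have "real m2 \<le> real m1" using m by simp
    ultimately show ?thesis
      using m by (intro split_inequality_long_factors[OF k]) simp_all
  next
    case False
    with m k show ?thesis
      by (intro split_inequality_short_factor short) simp_all
  qed
  show ?thesis
    unfolding split_inequality_def
  proof (intro allI impI)
    fix m1 m2 :: nat assume m: "1 \<le> m1" "1 \<le> m2" "M \<le> real (m1 + m2)"
    show "real (m1 + m2) ^ (k - 2)
        \<le> real m1 ^ (k - 2) / homogeneous_density k m2 + real m2 ^ (k - 2) / homogeneous_density k m1"
    proof (cases "m2 \<le> m1")
      case True
      with ineq m show ?thesis by simp
    next
      case False
      with ineq[of m1 m2] m show ?thesis by (simp add: add.commute)
    qed
  qed
qed

lemma split_inequality_cube: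
  assumes k: "k \<ge> 3"
  shows "split_inequality k (real k ^ 3)"
proof (rule split_inequalityI[OF k])
  fix m1 m2 :: nat
  assume m2: "1 \<le> m2" and short: "real m2 < real k / 2 * ln (real k)"
    and M: "real k ^ 3 \<le> real (m1 + m2)"
  define x where "x = real m2 / real (m1 + m2)"
  have "ln (real k) \<le> real k"
    using ln_le_minus_one[of "real k"] k by simp
  then have "real k / 2 * ln (real k) \<le> real k / 2 * real k"
    by (rule mult_left_mono) simp
  then have "real m2 \<le> real k * real k / 2"
    using short by simp
  then have "x \<le> (real k * real k / 2) / real k ^ 3"
    unfolding x_def using M k by (intro frac_le) simp_all
  also have "\<dots> = 1 / (2 * real k)"
    using k by (simp add: power3_eq_cube field_simps)
  finally have x: "0 \<le> x" "x \<le> 1 / (2 * real k)"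
    by (simp_all add: x_def)
  have "real (k - 2) * x \<le> real k * (1 / (2 * real k))"
    using x by (intro mult_mono) simp_all
  then have "1 / 2 \<le> 1 + real (k - 2) * (- x)"
    using k by simp
  also have "\<dots> \<le> (1 + (- x)) ^ (k - 2)"
  proof (rule Bernoulli_inequality)
    have "1 / (2 * real k) \<le> 1" using k by simp
    with x show "- 1 \<le> - x" by linarith
  qed
  finally have "1 / 2 \<le> (1 - x) ^ (k - 2)" by simp
  moreover have "homogeneous_density k m2 \<le> 1 / 2"
  proof -
    have "1 / real k \<le> 1 / 2" using k by (simp add: field_simps)
    with homogeneous_density_le_inverse[OF m2, of k] show ?thesis by linarith
  qed
  ultimately show "homogeneous_density k m2 \<le> (1 - real m2 / real (m1 + m2)) ^ (k - 2)"
    by (simp add: x_def)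
qed

lemma one_le_ln:
  fixes x :: real
  assumes "3 \<le> x"
  shows "1 \<le> ln x"
  using assms exp_le ln_le_cancel_iff[of "exp 1" x] by simp

lemma four_le_ln:
  fixes x :: real
  assumes "81 \<le> x"
  shows "4 \<le> ln x"
proof -
  have "4 * ln 3 = ln (81::real)"
    using ln_realpow[of 3 4] by simp
  also have "\<dots> \<le> ln x"
    using assms by simp
  finally show ?thesis
    using one_le_ln[of 3] by simp
qed

lemma exp_le_one_minus_power:
  fixes x :: real
  assumes "0 \<le> x" "x \<le> 1 / 4"
  shows "exp (-(3 / 2) * real n * x) \<le> (1 - x) ^ n"
proof -
  have "x * x \<le> x * (1 / 4)"
    using assms by (intro mult_left_mono) simp_all
  then have "-(3 / 2) * x \<le> - x - 2 * x\<^sup>2"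
    by (simp add: power2_eq_square)
  also have "\<dots> \<le> ln (1 - x)"
    using assms by (intro ln_one_minus_pos_lower_bound) simp_all
  finally have "real n * (-(3 / 2) * x) \<le> real n * ln (1 - x)"
    by (intro mult_left_mono) simp_all
  then have "exp (-(3 / 2) * real n * x) \<le> exp (ln (1 - x)) ^ n"
    by (simp add: exp_of_nat_mult[symmetric] mult_ac)
  also have "exp (ln (1 - x)) = 1 - x"
    using assms by simp
  finally show ?thesis .
qed

lemma parity_class_density_le_exp_half:
  assumes k: "k \<ge> 1" and j: "2 * j \<le> k"
  shows "parity_class_density k j \<le> 2 * exp (- real j / 2)"
proof -
  define y where "y = 2 * real j / real k"
  have y: "0 \<le> y" "y \<le> 1"
    using j k by (auto simp: y_def field_simps)
  have "1 \<le> (1 - y / 2) * (1 + y + y\<^sup>2 / 2)"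
  proof -
    have "y * y * y \<le> 1 * y"
      using y by (intro mult_right_mono) (simp_all add: mult_le_one)
    then have "y * y * y \<le> 2 * y"
      using y by linarith
    then show ?thesis by (simp add: power2_eq_square field_simps)
  qed
  also have "\<dots> \<le> (1 - y / 2) * exp y"
    using y by (intro mult_left_mono exp_lower_Taylor_quadratic) simp_all
  finally have "exp (- y) \<le> 1 - y / 2"
    by (simp add: exp_minus field_simps)
  then have "1 + exp (- y) \<le> 2 * (1 + (- y / 4))"
    by simp
  also have "\<dots> \<le> 2 * exp (- y / 4)"
    by (simp only: mult_le_cancel_left_pos zero_less_numeral exp_ge_add_one_self)
  moreover have "0 \<le> 1 + exp (- y)"
    using exp_gt_zero[of "- y"] by linarith
  ultimately have "(1 + exp (- y)) ^ k \<le> (2 * exp (- y / 4)) ^ k"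
    by (intro power_mono) simp_all
  also have "\<dots> = 2 ^ k * exp (- real j / 2)"
    using k by (simp add: power_mult_distrib exp_of_nat_mult[symmetric] y_def)
  also have "\<dots> = 2 ^ (k - 1) * (2 * exp (- real j / 2))"
    using k by (cases k) simp_all
  finally show ?thesis
    by (simp add: parity_class_density_def y_def field_simps)
qed

lemma homogeneous_density_le_exp:
  assumes k: "k \<ge> 81" and j: "1 \<le> j" "2 * j \<le> k"
  shows "homogeneous_density k j \<le> exp (- (3 * real j) / (4 * ln (real k)))"
proof -
  define L where "L = ln (real k)"
  have L: "4 \<le> L" using four_le_ln[of "real k"] k by (simp add: L_def)
  show ?thesis
  proof (cases "j \<le> 21")
    case True
    have "3 * real j \<le> 4 * L * L"
      using True L mult_mono[OF L L] by simp
    then have "(3 * real j) / (4 * L) \<le> L"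
      using L by (simp add: field_simps)
    then have "exp ((3 * real j) / (4 * L)) \<le> exp L"
      by simp
    also have "exp L = real k"
      using k by (simp add: L_def)
    finally have "exp ((3 * real j) / (4 * L)) \<le> real k" .
    then have "1 / real k \<le> 1 / exp ((3 * real j) / (4 * L))"
      using k by (intro divide_left_mono) simp_all
    also have "\<dots> = exp (- (3 * real j) / (4 * L))"
      by (simp add: exp_minus inverse_eq_divide)
    finally show ?thesis
      using homogeneous_density_le_inverse[OF j(1), of k] unfolding L_def by linarith
  next
    case False
    have "ln 2 + - real j / 2 \<le> - (3 * real j) / (4 * L)"
    proof -
      have "(3 * real j) / (4 * L) \<le> (3 * real j) / 16"
        using L by (intro divide_left_mono) simp_all
      moreover have "ln (2::real) \<le> 1"
        using ln_le_minus_one[of 2] by simp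
      ultimately show ?thesis using False by simp
    qed
    have "2 * exp (- real j / 2) = exp (ln 2 + - real j / 2)"
      by (simp only: exp_add exp_ln zero_less_numeral)
    also have "\<dots> \<le> exp (- (3 * real j) / (4 * L))"
      using \<open>ln 2 + - real j / 2 \<le> - (3 * real j) / (4 * L)\<close> by simp
    finally have "2 * exp (- real j / 2) \<le> exp (- (3 * real j) / (4 * L))" .
    moreover have "parity_class_density k j \<le> 2 * exp (- real j / 2)"
      using parity_class_density_le_exp_half[OF _ j(2)] k by simp
    ultimately show ?thesis
      using homogeneous_density_le_class_density[OF j(1), of k] unfolding L_def by linarith
  qed
qed

lemma homogeneous_density_le_geometric:
  assumes k: "k \<ge> 2" and j: "k \<le> 2 * j"
  shows "homogeneous_density k j \<le> (3 / 4) ^ (k - 2)"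
proof -
  have "exp (-2 * real j / real k) \<le> exp (-1)"
    using j k by (simp add: field_simps)
  also have "exp (-1::real) \<le> 2 / 5"
    using exp_lower_Taylor_quadratic[of 1] by (simp add: exp_minus field_simps)
  finally have "(1 + exp (-2 * real j / real k)) ^ k \<le> (7 / 5) ^ k"
    by (intro power_mono) simp_all
  then have "parity_class_density k j \<le> (7 / 5) ^ k / 2 ^ (k - 1)"
    unfolding parity_class_density_def by (simp add: divide_right_mono)
  also have "\<dots> = 49 / 50 * (7 / 10) ^ (k - 2)"
  proof -
    define t where "t = k - 2"
    have "k = t + 2" "k - 1 = t + 1" using k by (simp_all add: t_def)
    then have "(7 / 5 :: real) ^ k / 2 ^ (k - 1) = 49 / 50 * ((7 / 5) ^ t / 2 ^ t)"
      by (simp add: power_add)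
    also have "(7 / 5 :: real) ^ t / 2 ^ t = (7 / 10) ^ t"
      by (simp add: power_divide[symmetric])
    finally show ?thesis by (simp add: t_def)
  qed
  also have "\<dots> \<le> (3 / 4) ^ (k - 2)"
  proof -
    have "(7 / 10 :: real) ^ (k - 2) \<le> (3 / 4) ^ (k - 2)"
      by (rule power_mono) simp_all
    moreover have "0 \<le> (7 / 10 :: real) ^ (k - 2)"
      by simp
    ultimately show ?thesis by linarith
  qed
  finally show ?thesis
    using homogeneous_density_le_class_density[of j k] j k by simp
qed

lemma homogeneous_density_le_one_minus_power:
  assumes k: "k \<ge> 81" and j: "1 \<le> j"
    and x: "0 \<le> x" "x \<le> 1 / 4" "x \<le> real j / (2 * real k * ln (real k))"
  shows "homogeneous_density k j \<le> (1 - x) ^ (k - 2)"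
proof (cases "2 * j \<le> k")
  case True
  define L where "L = ln (real k)"
  have L: "4 \<le> L" using four_le_ln[of "real k"] k by (simp add: L_def)
  have "real (k - 2) * x \<le> real k * (real j / (2 * real k * L))"
    using x by (intro mult_mono) (simp_all add: L_def)
  also have "\<dots> = real j / (2 * L)"
    using k by (simp add: field_simps)
  finally have "- (3 * real j) / (4 * L) \<le> -(3 / 2) * real (k - 2) * x"
    using L by (simp add: field_simps)
  then have "exp (- (3 * real j) / (4 * L)) \<le> exp (-(3 / 2) * real (k - 2) * x)"
    by (simp only: exp_le_cancel_iff)
  also have "\<dots> \<le> (1 - x) ^ (k - 2)"
    by (rule exp_le_one_minus_power[OF x(1,2)])
  finally show ?thesis
    using homogeneous_density_le_exp[OF k j True] by (simp add: L_def)
next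
  case False
  have "homogeneous_density k j \<le> (3 / 4) ^ (k - 2)"
    using False k by (intro homogeneous_density_le_geometric) simp_all
  also have "\<dots> \<le> (1 - x) ^ (k - 2)"
    using x by (intro power_mono) simp_all
  finally show ?thesis .
qed

lemma split_inequality_k_ln_k:
  assumes k: "k \<ge> 81"
  shows "split_inequality k (2 * real k * ln (real k))"
proof (rule split_inequalityI)
  show "k \<ge> 3" using k by simp
  fix m1 m2 :: nat
  assume m2: "1 \<le> m2" and short: "real m2 < real k / 2 * ln (real k)"
    and M: "2 * real k * ln (real k) \<le> real (m1 + m2)"
  define L where "L = ln (real k)"
  have "0 < L"
    using k four_le_ln[of "real k"] by (simp add: L_def)
  then have "0 < 2 * real k * L"
    using k by simp
  have x: "real m2 / real (m1 + m2) \<le> real m2 / (2 * real k * L)"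
    using M \<open>0 < 2 * real k * L\<close> by (simp add: L_def frac_le)
  have "real m2 / (2 * real k * L) \<le> (real k / 2 * L) / (2 * real k * L)"
    using short \<open>0 < 2 * real k * L\<close> by (intro divide_right_mono) (simp_all add: L_def)
  also have "\<dots> = 1 / 4"
    using \<open>0 < L\<close> k by (simp add: field_simps)
  finally have "real m2 / real (m1 + m2) \<le> 1 / 4"
    using x by linarith
  with x show "homogeneous_density k m2 \<le> (1 - real m2 / real (m1 + m2)) ^ (k - 2)"
    using k m2 by (intro homogeneous_density_le_one_minus_power) (simp_all add: L_def)
qed

text \<open>For \<open>k \<le> 80\<close> the cruder threshold \<open>k ^ 3\<close> costs at most the factor
  \<open>(2 / 80 ^ 2) ^ 78 = (1 / 3200) ^ 78\<close>.\<close>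

lemma split_threshold_exists:
  assumes k: "k \<ge> 3"
  shows "\<exists>M\<ge>2. split_inequality k M \<and> (1 / 3200) ^ 78 \<le> (2 * real k * ln (real k) / M) ^ (k - 2)"
proof (cases "k \<ge> 81")
  case True
  have "1 \<le> ln (real k)"
    using four_le_ln[of "real k"] True by simp
  then have "2 \<le> 2 * real k * ln (real k)"
    using True mult_mono[of 1 "real k" 1 "ln (real k)"] by simp
  moreover have "(1 / 3200 :: real) ^ 78 \<le> (2 * real k * ln (real k) / (2 * real k * ln (real k))) ^ (k - 2)"
    using \<open>1 \<le> ln (real k)\<close> by (simp add: power_le_one)
  ultimately show ?thesis
    using split_inequality_k_ln_k[OF True] by blast
next
  case False
  have "1 \<le> ln (real k)"
    using one_le_ln[of "real k"] k by simp
  have "(1 / 3200 :: real) ^ 78 \<le> (1 / 3200) ^ (k - 2)"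
    using False by (intro power_decreasing) simp_all
  also have "\<dots> \<le> (2 / real k ^ 2) ^ (k - 2)"
  proof (rule power_mono)
    have "real k ^ 2 \<le> 80 ^ 2"
      using False by (intro power_mono) simp_all
    then show "1 / 3200 \<le> 2 / real k ^ 2"
      using k by (simp add: field_simps)
  qed simp
  also have "\<dots> \<le> (2 * real k * ln (real k) / real k ^ 3) ^ (k - 2)"
  proof (rule power_mono)
    have "2 / real k ^ 2 = 2 * real k * 1 / real k ^ 3"
      using k by (simp add: power2_eq_square power3_eq_cube)
    also have "\<dots> \<le> 2 * real k * ln (real k) / real k ^ 3"
      using \<open>1 \<le> ln (real k)\<close> by (intro divide_right_mono mult_left_mono) simp_all
    finally show "2 / real k ^ 2 \<le> 2 * real k * ln (real k) / real k ^ 3" .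
  qed simp
  finally have "(1 / 3200 :: real) ^ 78 \<le> (2 * real k * ln (real k) / real k ^ 3) ^ (k - 2)" .
  moreover have "2 \<le> real k ^ 3"
    using k power_mono[of 3 "real k" 3] by simp
  ultimately show ?thesis
    using split_inequality_cube[OF k] by blast
qed

lemma rpn_L_even_ge:
  assumes k: "k \<ge> 3" and n: "even n"
  shows "(1 / 3200) ^ 78 * (real n / (4 * real k * ln (real k))) ^ (k - 2) \<le> real (rpn (L_even n k))"
proof -
  obtain M where M: "M \<ge> 2" "split_inequality k M"
    and c: "(1 / 3200) ^ 78 \<le> (2 * real k * ln (real k) / M) ^ (k - 2)"
    using split_threshold_exists[OF k] by blast
  have "0 < ln (real k)" using k by simp
  then have "(1 / 3200) ^ 78 * (real n / (4 * real k * ln (real k))) ^ (k - 2)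
      \<le> (2 * real k * ln (real k) / M) ^ (k - 2) * (real n / (4 * real k * ln (real k))) ^ (k - 2)"
    using c by (intro mult_right_mono) simp_all
  also have "\<dots> = (real n / (2 * M)) ^ (k - 2)"
  proof -
    have "2 * real k * ln (real k) / M * (real n / (4 * real k * ln (real k))) = real n / (2 * M)"
      using \<open>0 < ln (real k)\<close> k by (simp add: field_simps)
    then show ?thesis by (simp only: power_mult_distrib[symmetric])
  qed
  also have "\<dots> \<le> real k * (real n / (2 * M)) ^ (k - 2)"
    using k M mult_right_mono[of 1 "real k" "(real n / (2 * M)) ^ (k - 2)"] by simp
  also have "\<dots> \<le> real (rpn (L_even n k))"
    using rpn_L_even_ge_of_split_inequality[OF k M n] .
  finally show ?thesis .
qed

theorem theorem7p3:
  shows "\<exists>c>0. \<forall>n k. even n \<and> k \<ge> 2 \<longrightarrow>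
     real (rpn (L_even n k)) \<ge>
       c * real n ^ (k - 2) / (4 * real k * ln (real k)) ^ (k - 2)"
proof (intro exI[of _ "(1 / 3200) ^ 78"] conjI allI impI)
  fix n k :: nat
  assume "even n \<and> k \<ge> 2"
  then have n: "even n" and k: "k = 2 \<or> k \<ge> 3" by auto
  have "(1 / 3200 :: real) ^ 78 \<le> 1"
    by (simp add: power_le_one)
  then show "(1 / 3200) ^ 78 * real n ^ (k - 2) / (4 * real k * ln (real k)) ^ (k - 2)
      \<le> real (rpn (L_even n k))"
    using k rpn_L_even_ge_1[OF n, of 2] rpn_L_even_ge[OF _ n]
    by (auto simp: power_divide)
qed simp

end
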